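(* Let $d \ge 2$ and let $a_1, \dots, a_d > 0$ be arbitrary reals. Let \[ S = \left\{ x \in \mathbb{R}^d \,:\, x_1, \dots, x_d \ge 0,\ \frac{x_1}{a_1} + \cdots + \frac{x_d}{a_d} \le 1 \right\}, \] and for every $I \subseteq [d] = \{1, \dots, d\}$ let \[ C_I = \left\{ x \in \mathbb{R}^d \,:\, \sum_{i \in I} \frac{|x_i|}{a_i} \le 1,\ x_j = 0 \text{ for all } j \in [d] \setminus I \right\}. \] Then for every real $t > 0$, \[ \left| tS \cap \mathbb{Z}^d \right| = \frac{1}{2^d} \sum_{I \subseteq [d]} \left| tC_I \cap \mathbb{Z}^d \right|. \]
   Context: For a set $P \subseteq \mathbb{R}^d$ and $t>0$, $tP = \{tx : x \in P\}$, and $|\cdot|$ applied to a set denotes its cardinality. For $I = \emptyset$ the set $C_\emptyset$ is $\{0\}$. *)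

theory Defs
  imports "HOL-Analysis.Analysis"
begin

definition lattice :: "(real ^ 'n) set" where
  "lattice = {x. \<forall>i. x $ i \<in> \<int>}"

definition simplexS :: "('n \<Rightarrow> real) \<Rightarrow> (real ^ 'n) set" where
  "simplexS a = {x. (\<forall>i. x $ i \<ge> 0) \<and> (\<Sum>i\<in>UNIV. x $ i / a i) \<le> 1}"

definition crossC :: "('n \<Rightarrow> real) \<Rightarrow> 'n set \<Rightarrow> (real ^ 'n) set" where
  "crossC a I = {x. (\<Sum>i\<in>I. \<bar>x $ i\<bar> / a i) \<le> 1 \<and> (\<forall>j. j \<notin> I \<longrightarrow> x $ j = 0)}"

definition dilate :: "real \<Rightarrow> (real ^ 'n) set \<Rightarrow> (real ^ 'n) set" where
  "dilate t P = (\<lambda>x. t *\<^sub>R x) ` P"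

end

theory Submission
  imports Defs
begin

text \<open>
  Every lattice point of \<open>tS\<close> is the vector of absolute values of exactly \<open>2^d\<close> pairs
  \<open>(I, x)\<close> with \<open>x \<in> tC\<^sub>I \<inter> \<int>\<^sup>d\<close>: a point \<open>y\<close> with support \<open>J\<close> has \<open>2^|J|\<close> sign patterns and
  lies in \<open>C\<^sub>I\<close> for the \<open>2^(d-|J|)\<close> sets \<open>I \<supseteq> J\<close>. Both choices are encoded together by one set
  \<open>\<sigma> \<subseteq> [d]\<close>: on the support, \<open>\<sigma>\<close> says which coordinates are negated; off the support, \<open>\<sigma>\<close>
  says which zero coordinates are added to \<open>I\<close>.
\<close>

definition abs_vec :: "'a::{ordered_ab_group_add_abs, linorder} ^ 'n \<Rightarrow> 'a ^ 'n" where
  "abs_vec x = (\<chi> i. \<bar>x $ i\<bar>)"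

definition flip_signs :: "'n set \<Rightarrow> 'a::ab_group_add ^ 'n \<Rightarrow> 'a ^ 'n" where
  "flip_signs \<sigma> y = (\<chi> i. if i \<in> \<sigma> then - y $ i else y $ i)"

lemma abs_vec_nth [simp]: "abs_vec x $ i = \<bar>x $ i\<bar>"
  by (simp add: abs_vec_def)

lemma flip_signs_nth [simp]: "flip_signs \<sigma> y $ i = (if i \<in> \<sigma> then - y $ i else y $ i)"
  by (simp add: flip_signs_def)

lemma sum_card_abs_vec_vimage:
  fixes Q :: "('a::{ordered_ab_group_add_abs, linorder} ^ 'n::finite) set"
  assumes "finite Q" and "\<And>y i. y \<in> Q \<Longrightarrow> 0 \<le> y $ i"
  shows "(\<Sum>I\<in>Pow UNIV. card {x. abs_vec x \<in> Q \<and> (\<forall>j. j \<notin> I \<longrightarrow> x $ j = 0)})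
           = 2 ^ CARD('n) * card Q"
proof -
  define C where "C I = {x. abs_vec x \<in> Q \<and> (\<forall>j. j \<notin> I \<longrightarrow> x $ j = 0)}" for I :: "'n set"
  define g where "g = (\<lambda>(y :: 'a ^ 'n, \<sigma> :: 'n set). ({i. y $ i \<noteq> 0} \<union> \<sigma>, flip_signs \<sigma> y))"
  define h where "h = (\<lambda>(I :: 'n set, x :: 'a ^ 'n). (abs_vec x, {i. x $ i < 0} \<union> (I - {i. x $ i \<noteq> 0})))"
  have abs_flip: "abs_vec (flip_signs \<sigma> y) = y" if "y \<in> Q" for y \<sigma>
    using assms(2)[OF that] by (simp add: vec_eq_iff)
  have bij: "bij_betw g (Q \<times> Pow UNIV) (Sigma (Pow UNIV) C)"
  proof (rule bij_betw_byWitness[where f'=h])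
    show "\<forall>p\<in>Q \<times> Pow UNIV. h (g p) = p"
    proof (clarify)
      fix y \<sigma> assume "y \<in> Q"
      then have "0 \<le> y $ i" for i
        by (rule assms(2))
      then have "{i. flip_signs \<sigma> y $ i < 0} \<union> ({i. y $ i \<noteq> 0} \<union> \<sigma> - {i. flip_signs \<sigma> y $ i \<noteq> 0}) = \<sigma>"
        by (auto simp: order.strict_iff_order dest: order.antisym)
      with \<open>y \<in> Q\<close> show "h (g (y, \<sigma>)) = (y, \<sigma>)"
        by (simp add: g_def h_def abs_flip)
    qed
    show "\<forall>p\<in>Sigma (Pow UNIV) C. g (h p) = p"
    proof (clarify)
      fix I x assume "x \<in> C I"
      then have "\<forall>j. j \<notin> I \<longrightarrow> x $ j = 0" by (simp add: C_def)
      then show "g (h (I, x)) = (I, x)"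
        by (auto simp: g_def h_def vec_eq_iff)
    qed
    show "g ` (Q \<times> Pow UNIV) \<subseteq> Sigma (Pow UNIV) C"
      by (auto simp: g_def C_def abs_flip)
    show "h ` Sigma (Pow UNIV) C \<subseteq> Q \<times> Pow UNIV"
      by (auto simp: h_def C_def)
  qed
  then have "finite (Sigma (Pow UNIV) C)"
    using assms(1) by (simp add: bij_betw_finite[symmetric])
  then have "finite (C I)" for I
    by (rule finite_subset[rotated, OF finite_imageI[where h=snd]]) force
  then have "(\<Sum>I\<in>Pow UNIV. card (C I)) = card (Sigma (Pow UNIV) C)"
    by (simp add: card_SigmaI)
  also have "\<dots> = card (Q \<times> (Pow UNIV :: 'n set set))"
    using bij by (simp add: bij_betw_same_card)
  also have "\<dots> = 2 ^ CARD('n) * card Q"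
    by (simp add: card_cartesian_product card_Pow)
  finally show ?thesis by (simp add: C_def)
qed

lemma abs_vec_in_lattice_iff [simp]: "abs_vec x \<in> lattice \<longleftrightarrow> x \<in> lattice"
proof -
  have "\<bar>r\<bar> \<in> \<int> \<longleftrightarrow> r \<in> \<int>" for r :: real
    by (cases "0 \<le> r") (simp_all add: minus_in_Ints_iff)
  then show ?thesis
    by (simp add: lattice_def)
qed

lemma finite_lattice_Int_bounded:
  fixes S :: "(real ^ 'n::finite) set"
  assumes "bounded S"
  shows "finite (lattice \<inter> S)"
proof -
  obtain B where B: "\<And>x. x \<in> S \<Longrightarrow> norm x \<le> B"
    using assms by (auto simp: bounded_iff)
  define box where "box = PiE UNIV (\<lambda>_ :: 'n. {-\<lceil>B\<rceil>..\<lceil>B\<rceil>})"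
  have "lattice \<inter> S \<subseteq> (\<lambda>f. \<chi> i. of_int (f i)) ` box"
  proof
    fix x assume x: "x \<in> lattice \<inter> S"
    then have "\<forall>i. \<exists>k. x $ i = of_int k"
      by (auto simp: lattice_def Ints_def)
    then obtain f where f: "\<And>i. x $ i = of_int (f i)"
      by metis
    have "\<bar>of_int (f i)\<bar> \<le> B" for i
      using component_le_norm_cart[of x i] B x f by (metis IntD2 order.trans)
    then have "f i \<in> {-\<lceil>B\<rceil>..\<lceil>B\<rceil>}" for i
      by (metis abs_le_iff atLeastAtMost_iff ceiling_mono ceiling_of_int minus_le_iff of_int_minus)
    then have "f \<in> box"
      by (auto simp: box_def)
    moreover have "x = (\<chi> i. of_int (f i))"
      by (simp add: vec_eq_iff f)
    ultimately show "x \<in> (\<lambda>f. \<chi> i. of_int (f i)) ` box"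
      by blast
  qed
  moreover have "finite box"
    by (simp add: box_def finite_PiE)
  ultimately show ?thesis
    using finite_subset by blast
qed

lemma mem_dilate: "t \<noteq> 0 \<Longrightarrow> x \<in> dilate t P \<longleftrightarrow> x /\<^sub>R t \<in> P"
  by (force simp: dilate_def image_iff)

lemma dilate_abs_vec_vimage:
  fixes P :: "(real ^ 'n::finite) set"
  assumes "t > 0"
  shows "dilate t {x. abs_vec x \<in> P \<and> (\<forall>j. j \<notin> I \<longrightarrow> x $ j = 0)}
           = {x. abs_vec x \<in> dilate t P \<and> (\<forall>j. j \<notin> I \<longrightarrow> x $ j = 0)}"
proof -
  have "abs_vec (x /\<^sub>R t) = abs_vec x /\<^sub>R t" for x :: "real ^ 'n"
    using assms by (simp add: vec_eq_iff abs_mult)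
  with assms show ?thesis
    by (auto simp: mem_dilate)
qed

lemma crossC_eq_abs_vec_vimage:
  fixes a :: "'n::finite \<Rightarrow> real"
  shows "crossC a I = {x. abs_vec x \<in> simplexS a \<and> (\<forall>j. j \<notin> I \<longrightarrow> x $ j = 0)}"
proof -
  have "(\<Sum>i\<in>UNIV. \<bar>x $ i\<bar> / a i) = (\<Sum>i\<in>I. \<bar>x $ i\<bar> / a i)"
    if "\<forall>j. j \<notin> I \<longrightarrow> x $ j = 0" for x :: "real ^ 'n"
    using that by (intro sum.mono_neutral_right) auto
  then show ?thesis
    by (auto simp: crossC_def simplexS_def)
qed

lemma simplexS_subset_cbox:
  assumes "\<And>i. a i > 0"
  shows "simplexS a \<subseteq> cbox 0 (\<chi> i. a i)"
proof
  fix x assume x: "x \<in> simplexS a"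
  have "x $ i \<le> a i" for i
  proof -
    have "x $ i / a i \<le> (\<Sum>j\<in>UNIV. x $ j / a j)"
      using x assms by (intro member_le_sum) (auto simp: simplexS_def less_imp_le)
    also have "\<dots> \<le> 1"
      using x by (simp add: simplexS_def)
    finally show ?thesis
      using assms[of i] by (simp add: divide_le_eq)
  qed
  with x show "x \<in> cbox 0 (\<chi> i. a i)"
    by (simp add: mem_box_cart simplexS_def)
qed

theorem proposition1:
  fixes a :: "'n::finite \<Rightarrow> real" and t :: real
  assumes "CARD('n) \<ge> 2"
    and "\<And>i. a i > 0"
    and "t > 0"
  shows "real (card (dilate t (simplexS a) \<inter> lattice)) =
           (1 / 2 ^ CARD('n)) *
           (\<Sum>I\<in>Pow (UNIV :: 'n set). real (card (dilate t (crossC a I) \<inter> lattice)))"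
proof -
  define Q where "Q = dilate t (simplexS a) \<inter> lattice"
  have cross: "dilate t (crossC a I) \<inter> lattice = {x. abs_vec x \<in> Q \<and> (\<forall>j. j \<notin> I \<longrightarrow> x $ j = 0)}"
    for I
    by (auto simp: Q_def crossC_eq_abs_vec_vimage dilate_abs_vec_vimage[OF assms(3)])
  have "bounded (simplexS a)"
    using bounded_subset[OF bounded_cbox simplexS_subset_cbox] assms(2) .
  then have "bounded (dilate t (simplexS a))"
    unfolding dilate_def by (rule bounded_scaling)
  then have "finite Q"
    by (simp add: Q_def finite_lattice_Int_bounded Int_commute)
  moreover have "0 \<le> y $ i" if "y \<in> Q" for y i
    using that assms(3) by (auto simp: Q_def dilate_def simplexS_def)
  ultimately have "(\<Sum>I\<in>Pow UNIV. card (dilate t (crossC a I) \<inter> lattice)) = 2 ^ CARD('n) * card Q"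
    unfolding cross by (rule sum_card_abs_vec_vimage)
  then show ?thesis
    by (simp add: Q_def flip: of_nat_sum)
qed

end
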